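(* Let $\mathbb D=\{z\in\mathbb C:|z|<1\}$ and let $\mathcal P$ be the set of holomorphic functions $p$ on $\mathbb D$ with $\operatorname{Re} p(z)>0$ for all $z\in\mathbb D$ (no normalization $p(0)=1$ is imposed). For $p\in\mathcal P$ and $0<r<1$ set \[ I_p(r):=\int_0^{2\pi}\left|\frac{z p'(z)}{p(z)}\right|^2\,d\theta,\qquad z=re^{i\theta}. \] Let $\Phi:(0,1)\to(0,\infty)$ satisfy $\Phi(r)=o\bigl((1-r)^{-2}\bigr)$ as $r\to1^-$. Then there exists $p_\Phi\in\mathcal P$ such that \[ \limsup_{r\to1^-}\frac{I_{p_\Phi}(r)}{\Phi(r)}=+\infty, \] i.e. $I_{p_\Phi}(r)\neq O(\Phi(r))$ as $r\to1^-$. *)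

theory Defs
  imports "HOL-Complex_Analysis.Complex_Analysis" "HOL-Library.Landau_Symbols"
begin

definition carath_class :: "(complex \<Rightarrow> complex) set" where
  "carath_class = {p. p holomorphic_on ball 0 1 \<and> (\<forall>z\<in>ball 0 1. Re (p z) > 0)}"

definition I_int :: "(complex \<Rightarrow> complex) \<Rightarrow> real \<Rightarrow> real" where
  "I_int p r = integral {0..2*pi}
     (\<lambda>\<theta>. (let z = complex_of_real r * exp (\<i> * complex_of_real \<theta>)
            in (cmod (z * deriv p z / p z))\<^sup>2))"

end

(* Take p = exp G with the gap series G(z) = sum_k c_k z^(n_k), c_k = 2^-(k+1). Then |G| <= 1 < pi/2,
   so Re p > 0. On |z| = r we have z p'/p = z G'(z) = sum_k c_k n_k r^(n_k) e^(i n_k theta), so by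
   Bessel's inequality I_p(r) >= 2 pi (c_k n_k r^(n_k))^2 for each k. At r_k = 1 - 1/(4 n_k) Bernoulli
   gives r_k^(n_k) >= 3/4, hence I_p(r_k) >= pi (c_k n_k)^2. Since Phi = o((1 - r)^-2), the exponents
   n_k can be chosen increasing so fast that Phi(r_k) <= c_k^2 n_k^2 / (k + 1), and then
   I_p(r_k) / Phi(r_k) >= pi (k + 1). *)
theory Submission
  imports Defs
begin

lemma has_integral_cos_int_mult:
  fixes m :: int
  shows "((\<lambda>\<theta>. cos (of_int m * \<theta>)) has_integral (if m = 0 then 2*pi else 0)) {0..2*pi}"
proof (cases "m = 0")
  case True
  then show ?thesis using has_integral_const_real[of "1::real" 0 "2*pi"] by simp
next
  case False
  have deriv: "((\<lambda>\<theta>. sin (of_int m * \<theta>) / of_int m) has_vector_derivative cos (of_int m * x))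
                 (at x within {0..2*pi})" for x
    using False
    by (auto intro!: derivative_eq_intros simp: has_real_derivative_iff_has_vector_derivative[symmetric])
  have "sin (of_int m * (2*pi)) = 0"
    by (subst sin_zero_iff_int2) (rule exI[of _ "2*m"], simp)
  with fundamental_theorem_of_calculus[of 0 "2*pi", OF _ deriv] False show ?thesis
    by simp
qed

lemma has_integral_suminf_cos:
  fixes a :: "nat \<Rightarrow> real" and m :: "nat \<Rightarrow> int"
  assumes summable: "summable (\<lambda>k. \<bar>a k\<bar>)"
  shows "((\<lambda>\<theta>. \<Sum>k. a k * cos (of_int (m k) * \<theta>)) has_integral
           (\<Sum>k. a k * (if m k = 0 then 2*pi else 0))) {0..2*pi}"
proof -
  define f where "f N \<theta> = (\<Sum>k<N. a k * cos (of_int (m k) * \<theta>))" for N \<theta>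
  have f_integral: "(f N has_integral (\<Sum>k<N. a k * (if m k = 0 then 2*pi else 0))) {0..2*pi}" for N
    unfolding f_def
    by (intro has_integral_sum finite_lessThan has_integral_mult_right has_integral_cos_int_mult)
  have term_le: "\<bar>a k * cos (of_int (m k) * \<theta>)\<bar> \<le> \<bar>a k\<bar>" for k \<theta>
    by (auto simp: abs_mult intro!: mult_left_le)
  have f_le: "norm (f N \<theta>) \<le> (\<Sum>k. \<bar>a k\<bar>)" for N \<theta>
  proof -
    have "norm (f N \<theta>) \<le> (\<Sum>k<N. \<bar>a k\<bar>)"
      unfolding f_def real_norm_def by (rule order_trans[OF sum_abs sum_mono[OF term_le]])
    also have "\<dots> \<le> (\<Sum>k. \<bar>a k\<bar>)"
      by (intro sum_le_suminf summable) auto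
    finally show ?thesis .
  qed
  have f_lim: "(\<lambda>N. f N \<theta>) \<longlonglongrightarrow> (\<Sum>k. a k * cos (of_int (m k) * \<theta>))" for \<theta>
    unfolding f_def
    by (intro summable_LIMSEQ summable_comparison_test'[OF summable, of 0]) (simp add: term_le)
  have integral_lim: "(\<lambda>N. \<Sum>k<N. a k * (if m k = 0 then 2*pi else 0))
                        \<longlonglongrightarrow> (\<Sum>k. a k * (if m k = 0 then 2*pi else 0))"
    by (intro summable_LIMSEQ summable_comparison_test'[OF summable_mult2[OF summable, of "2*pi"], where N=0])
       (auto simp: abs_mult)
  note dominated = dominated_convergence[of f "{0..2*pi}" "\<lambda>_. \<Sum>k. \<bar>a k\<bar>", OF _ _ f_le f_lim]
  have integrable: "(\<lambda>\<theta>. \<Sum>k. a k * cos (of_int (m k) * \<theta>)) integrable_on {0..2*pi}"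
    using dominated f_integral by blast
  have "(\<lambda>N. integral {0..2*pi} (f N))
          \<longlonglongrightarrow> integral {0..2*pi} (\<lambda>\<theta>. \<Sum>k. a k * cos (of_int (m k) * \<theta>))"
    using dominated f_integral by blast
  then have "(\<lambda>N. \<Sum>k<N. a k * (if m k = 0 then 2*pi else 0))
               \<longlonglongrightarrow> integral {0..2*pi} (\<lambda>\<theta>. \<Sum>k. a k * cos (of_int (m k) * \<theta>))"
    by (simp add: integral_unique[OF f_integral])
  with integral_lim have "integral {0..2*pi} (\<lambda>\<theta>. \<Sum>k. a k * cos (of_int (m k) * \<theta>))
                            = (\<Sum>k. a k * (if m k = 0 then 2*pi else 0))"
    by (rule LIMSEQ_unique[rotated])
  with integrable_integral[OF integrable] show ?thesis
    by simp
qed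

lemma Re_mult_cnj_le_power2_norm:
  fixes w u :: complex and b :: real
  assumes "cmod u = 1"
  shows "2 * b * Re (w * cnj u) - b\<^sup>2 \<le> (cmod w)\<^sup>2"
proof -
  have u: "(Re u)\<^sup>2 + (Im u)\<^sup>2 = 1"
    using assms by (simp add: cmod_power2[symmetric])
  have "0 \<le> (Re w - b * Re u)\<^sup>2 + (Im w - b * Im u)\<^sup>2"
    by simp
  also have "\<dots> = (Re w)\<^sup>2 + (Im w)\<^sup>2 - 2 * b * (Re w * Re u + Im w * Im u)
                     + b\<^sup>2 * ((Re u)\<^sup>2 + (Im u)\<^sup>2)"
    by (simp add: power2_eq_square algebra_simps)
  finally show ?thesis
    using u by (simp add: cmod_power2)
qed

text \<open>Bessel's inequality for a single coefficient, obtained without Parseval by integrating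
  the pointwise minorant 2 a_j Re (h(\<theta>) e^(-i n_j \<theta>)) - a_j^2 of |h(\<theta>)|^2.\<close>
lemma power2_coeff_le_integral_cis_series:
  fixes a :: "nat \<Rightarrow> real" and n :: "nat \<Rightarrow> int"
  assumes summable: "summable (\<lambda>k. \<bar>a k\<bar>)" and "inj n"
    and integral: "((\<lambda>\<theta>. (cmod (\<Sum>k. of_real (a k) * cis (of_int (n k) * \<theta>)))\<^sup>2) has_integral I)
                     {0..2*pi}"
  shows "2 * pi * (a j)\<^sup>2 \<le> I"
proof -
  define h where "h \<theta> = (\<Sum>k. of_real (a k) * cis (of_int (n k) * \<theta>))" for \<theta>
  note integral = integral[folded h_def]
  define S where "S \<theta> = (\<Sum>k. a k * cos (of_int (n k - n j) * \<theta>))" for \<theta>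
  have Re_h: "Re (h \<theta> * cnj (cis (of_int (n j) * \<theta>))) = S \<theta>" for \<theta>
  proof -
    have "summable (\<lambda>k. of_real (a k) * cis (of_int (n k) * \<theta>))"
      by (rule summable_norm_cancel) (simp add: norm_mult summable)
    then have "(\<lambda>k. Re (of_real (a k) * cis (of_int (n k) * \<theta>) * cnj (cis (of_int (n j) * \<theta>))))
                 sums Re (h \<theta> * cnj (cis (of_int (n j) * \<theta>)))"
      unfolding h_def by (intro sums_Re sums_mult2 summable_sums)
    then show ?thesis
      by (simp add: S_def sums_iff cis_cnj cis_mult algebra_simps)
  qed
  have "(\<lambda>k. a k * (if n k - n j = 0 then 2*pi else 0)) = (\<lambda>k. if k = j then 2 * pi * a k else 0)"
    using \<open>inj n\<close> by (auto simp: fun_eq_iff inj_eq)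
  then have S_integral: "(S has_integral 2 * pi * a j) {0..2*pi}"
    using has_integral_suminf_cos[OF summable, of "\<lambda>k. n k - n j"] sums_single[of j "\<lambda>k. 2 * pi * a k"]
    by (simp add: S_def[abs_def] sums_iff)
  have "((\<lambda>\<theta>. 2 * a j * S \<theta> - (a j)\<^sup>2) has_integral 2 * a j * (2 * pi * a j) - 2 * pi * (a j)\<^sup>2)
          {0..2*pi}"
    using has_integral_const_real[of "(a j)\<^sup>2" 0 "2*pi"]
    by (intro has_integral_diff has_integral_mult_right S_integral) (simp add: mult_ac)
  then have "2 * a j * (2 * pi * a j) - 2 * pi * (a j)\<^sup>2 \<le> I"
  proof (rule has_integral_le[OF _ integral])
    fix \<theta> :: real
    show "2 * a j * S \<theta> - (a j)\<^sup>2 \<le> (cmod (h \<theta>))\<^sup>2"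
      using Re_mult_cnj_le_power2_norm[of "cis (of_int (n j) * \<theta>)" "a j" "h \<theta>"] Re_h[of \<theta>]
      by simp
  qed
  then show ?thesis
    by (simp add: power2_eq_square)
qed

definition gap_series :: "(nat \<Rightarrow> real) \<Rightarrow> (nat \<Rightarrow> nat) \<Rightarrow> complex \<Rightarrow> complex" where
  "gap_series c n z = (\<Sum>k. complex_of_real (c k) * z ^ n k)"

lemma gap_series_has_field_derivative:
  fixes c :: "nat \<Rightarrow> real"
  assumes "summable c" "\<And>k. 0 \<le> c k" "z \<in> ball 0 1"
  shows "(gap_series c n has_field_derivative (\<Sum>k. complex_of_real (c k) * of_nat (n k) * z ^ (n k - 1)))
           (at z)"
    and "summable (\<lambda>k. complex_of_real (c k) * of_nat (n k) * z ^ (n k - 1))"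
proof -
  have "\<exists>g g'. \<forall>x \<in> ball 0 1. ((\<lambda>k. complex_of_real (c k) * x ^ n k) sums g x)
          \<and> ((\<lambda>k. complex_of_real (c k) * of_nat (n k) * x ^ (n k - 1)) sums g' x)
          \<and> (g has_field_derivative g' x) (at x)"
  proof (rule series_and_derivative_comparison_complex)
    show "((\<lambda>x. complex_of_real (c k) * x ^ n k) has_field_derivative
             complex_of_real (c k) * of_nat (n k) * x ^ (n k - 1)) (at x)" for k x
      by (auto intro!: derivative_eq_intros)
    fix x :: complex assume "x \<in> ball 0 1"
    show "\<exists>d h. 0 < d \<and> summable h \<and> range h \<subseteq> \<real>\<^sub>\<ge>\<^sub>0 \<and> (\<forall>\<^sub>F k in sequentially.
            \<forall>y\<in>ball x d \<inter> ball 0 1. cmod (complex_of_real (c k) * y ^ n k) \<le> cmod (h k))"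
    proof (intro exI conjI)
      show "summable (\<lambda>k. complex_of_real (c k))"
        using assms(1) by simp
      show "range (\<lambda>k. complex_of_real (c k)) \<subseteq> \<real>\<^sub>\<ge>\<^sub>0"
        using assms(2) by auto
      show "\<forall>\<^sub>F k in sequentially. \<forall>y\<in>ball x 1 \<inter> ball 0 1.
              cmod (complex_of_real (c k) * y ^ n k) \<le> cmod (complex_of_real (c k))"
        using assms(2)
        by (intro always_eventually) (auto simp: norm_mult norm_power intro!: mult_left_le power_le_one)
    qed simp
  qed simp
  then obtain g g' where g: "\<forall>x \<in> ball 0 1. ((\<lambda>k. complex_of_real (c k) * x ^ n k) sums g x)
          \<and> ((\<lambda>k. complex_of_real (c k) * of_nat (n k) * x ^ (n k - 1)) sums g' x)
          \<and> (g has_field_derivative g' x) (at x)"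
    by blast
  then have derivative_sums: "(\<lambda>k. complex_of_real (c k) * of_nat (n k) * z ^ (n k - 1)) sums g' z"
    and g_deriv: "(g has_field_derivative g' z) (at z)"
    using assms(3) by blast+
  then show "summable (\<lambda>k. complex_of_real (c k) * of_nat (n k) * z ^ (n k - 1))"
    by (blast intro: sums_summable)
  have "\<And>x. x \<in> ball 0 1 \<Longrightarrow> g x = gap_series c n x"
    unfolding gap_series_def using g sums_unique by blast
  then have "(gap_series c n has_field_derivative g' z) (at z)"
    by (rule has_field_derivative_transform_within_open[OF g_deriv open_ball assms(3)])
  then show "(gap_series c n has_field_derivative (\<Sum>k. complex_of_real (c k) * of_nat (n k) * z ^ (n k - 1)))
               (at z)"
    using sums_unique[OF derivative_sums] by simp
qed

lemma gap_series_holomorphic: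
  fixes c :: "nat \<Rightarrow> real"
  assumes "summable c" "\<And>k. 0 \<le> c k"
  shows "gap_series c n holomorphic_on ball 0 1"
  using gap_series_has_field_derivative(1)[OF assms] holomorphic_on_open by blast

lemma norm_gap_series_le:
  fixes c :: "nat \<Rightarrow> real"
  assumes "summable c" "\<And>k. 0 \<le> c k" "cmod z \<le> 1"
  shows "cmod (gap_series c n z) \<le> suminf c"
  unfolding gap_series_def
  by (rule norm_suminf_le[OF _ assms(1)])
     (use assms in \<open>auto simp: norm_mult norm_power intro!: mult_left_le power_le_one\<close>)

lemma exp_in_carath_class:
  assumes "G holomorphic_on ball 0 1" and Im_bound: "\<And>z. z \<in> ball 0 1 \<Longrightarrow> \<bar>Im (G z)\<bar> < pi/2"
  shows "(\<lambda>z. exp (G z)) \<in> carath_class"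
  unfolding carath_class_def
proof safe
  show "(\<lambda>z. exp (G z)) holomorphic_on ball 0 1"
    using assms(1) by (intro holomorphic_intros)
  fix z :: complex assume "z \<in> ball 0 1"
  then have "\<bar>Im (G z)\<bar> < pi/2"
    by (rule Im_bound)
  then have "cos (Im (G z)) > 0"
    by (intro cos_gt_zero_pi) (simp_all add: abs_less_iff)
  then show "Re (exp (G z)) > 0"
    by (simp add: Re_exp)
qed

lemma exp_gap_series_in_carath_class:
  fixes c :: "nat \<Rightarrow> real"
  assumes "summable c" "\<And>k. 0 \<le> c k" "suminf c < pi/2"
  shows "(\<lambda>z. exp (gap_series c n z)) \<in> carath_class"
proof (rule exp_in_carath_class[OF gap_series_holomorphic[OF assms(1,2)]])
  fix z :: complex assume "z \<in> ball 0 1"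
  then have "cmod (gap_series c n z) \<le> suminf c"
    by (intro norm_gap_series_le assms(1,2)) simp
  then show "\<bar>Im (gap_series c n z)\<bar> < pi/2"
    using abs_Im_le_cmod[of "gap_series c n z"] assms(3) by linarith
qed

lemma has_integral_I_int:
  assumes "p holomorphic_on ball 0 1" "\<And>z. z \<in> ball 0 1 \<Longrightarrow> p z \<noteq> 0" "0 \<le> r" "r < 1"
  shows "((\<lambda>\<theta>. (cmod (rcis r \<theta> * deriv p (rcis r \<theta>) / p (rcis r \<theta>)))\<^sup>2) has_integral I_int p r)
           {0..2*pi}"
proof -
  have "continuous_on (ball 0 1) (\<lambda>z. z * deriv p z / p z)"
    using assms(2) by (intro holomorphic_on_imp_continuous_on holomorphic_intros assms(1)) auto
  moreover have "continuous_on {0..2*pi} (\<lambda>\<theta>. rcis r \<theta>)"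
    unfolding rcis_def cis_conv_exp by (intro continuous_intros)
  moreover have "(\<lambda>\<theta>. rcis r \<theta>) ` {0..2*pi} \<subseteq> ball 0 1"
    using assms(3,4) by auto
  ultimately have "continuous_on {0..2*pi} (\<lambda>\<theta>. rcis r \<theta> * deriv p (rcis r \<theta>) / p (rcis r \<theta>))"
    by (rule continuous_on_compose2)
  then have "continuous_on {0..2*pi} (\<lambda>\<theta>. (cmod (rcis r \<theta> * deriv p (rcis r \<theta>) / p (rcis r \<theta>)))\<^sup>2)"
    by (intro continuous_on_power continuous_on_norm)
  then show ?thesis
    unfolding I_int_def Let_def rcis_def cis_conv_exp
    by (rule integrable_integral[OF integrable_continuous_interval])
qed

lemma logderiv_exp_gap_series_sums:
  fixes c :: "nat \<Rightarrow> real"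
  assumes "summable c" "\<And>k. 0 \<le> c k" "0 \<le> r" "r < 1"
  shows "(\<lambda>k. of_real (c k * n k * r ^ n k) * cis (of_int (int (n k)) * \<theta>)) sums
           (rcis r \<theta> * deriv (\<lambda>z. exp (gap_series c n z)) (rcis r \<theta>) / exp (gap_series c n (rcis r \<theta>)))"
proof -
  define z where "z = rcis r \<theta>"
  define G' where "G' = (\<Sum>k. complex_of_real (c k) * of_nat (n k) * z ^ (n k - 1))"
  have z: "z \<in> ball 0 1"
    using assms(3,4) by (simp add: z_def)
  have "((\<lambda>z. exp (gap_series c n z)) has_field_derivative exp (gap_series c n z) * G') (at z)"
    unfolding G'_def by (rule derivative_eq_intros gap_series_has_field_derivative(1)[OF assms(1,2) z])+ simp
  then have logderiv: "z * deriv (\<lambda>z. exp (gap_series c n z)) z / exp (gap_series c n z) = z * G'"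
    by (simp add: DERIV_imp_deriv)
  have derivative_sums: "(\<lambda>k. z * (complex_of_real (c k) * of_nat (n k) * z ^ (n k - 1))) sums (z * G')"
    unfolding G'_def by (intro sums_mult summable_sums gap_series_has_field_derivative(2)[OF assms(1,2) z])
  have term_eq: "z * (complex_of_real (c k) * of_nat (n k) * z ^ (n k - 1))
                   = of_real (c k * n k * r ^ n k) * cis (of_int (int (n k)) * \<theta>)" for k
  proof -
    have "z * (complex_of_real (c k) * of_nat (n k) * z ^ (n k - 1))
            = complex_of_real (c k) * (of_nat (n k) * (z * z ^ (n k - 1)))"
      by (simp add: mult_ac)
    also have "of_nat (n k) * (z * z ^ (n k - 1)) = of_nat (n k) * z ^ n k"
      by (cases "n k") simp_all
    also have "z ^ n k = of_real (r ^ n k) * cis (of_int (int (n k)) * \<theta>)"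
      unfolding z_def by (simp only: DeMoivre2) (simp add: rcis_def)
    finally show ?thesis
      by (simp add: mult_ac)
  qed
  from derivative_sums show ?thesis
    unfolding term_eq z_def[symmetric] logderiv .
qed

lemma I_int_exp_gap_series_ge:
  fixes c :: "nat \<Rightarrow> real"
  assumes "summable c" "\<And>k. 0 \<le> c k" "inj n" "0 \<le> r" "r < 1"
  shows "2 * pi * (c j * n j * r ^ n j)\<^sup>2 \<le> I_int (\<lambda>z. exp (gap_series c n z)) r"
proof -
  define p where "p = (\<lambda>z. exp (gap_series c n z))"
  define a where "a k = c k * n k * r ^ n k" for k
  have series: "(\<lambda>k. of_real (a k) * cis (of_int (int (n k)) * \<theta>)) sums
                  (rcis r \<theta> * deriv p (rcis r \<theta>) / p (rcis r \<theta>))" for \<theta>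
    unfolding a_def p_def by (rule logderiv_exp_gap_series_sums[OF assms(1,2,4,5)])
  have "summable (\<lambda>k. complex_of_real (a k))"
    using series[of 0] by (simp add: sums_iff)
  then have "summable a"
    by (simp only: summable_complex_of_real)
  moreover have "\<bar>a k\<bar> = a k" for k
    using assms(2,4) by (simp add: a_def)
  ultimately have a_summable: "summable (\<lambda>k. \<bar>a k\<bar>)"
    by simp
  have "p holomorphic_on ball 0 1"
    unfolding p_def by (intro holomorphic_intros gap_series_holomorphic assms(1,2))
  then have "((\<lambda>\<theta>. (cmod (rcis r \<theta> * deriv p (rcis r \<theta>) / p (rcis r \<theta>)))\<^sup>2) has_integral I_int p r)
               {0..2*pi}"
    by (rule has_integral_I_int) (simp_all add: p_def assms(4,5))
  then have "((\<lambda>\<theta>. (cmod (\<Sum>k. of_real (a k) * cis (of_int (int (n k)) * \<theta>)))\<^sup>2) has_integral I_int p r)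
               {0..2*pi}"
    using series by (simp add: sums_iff)
  moreover have "inj (\<lambda>k. int (n k))"
    using \<open>inj n\<close> by (simp add: inj_def)
  ultimately have "2 * pi * (a j)\<^sup>2 \<le> I_int p r"
    using power2_coeff_le_integral_cis_series[OF a_summable] by blast
  then show ?thesis
    by (simp add: a_def p_def)
qed

lemma filterlim_one_minus_quarter_inverse_at_left:
  "filterlim (\<lambda>m::nat. 1 - 1 / (4 * real m)) (at_left 1) sequentially"
proof (rule tendsto_imp_filterlim_at_left)
  have "(\<lambda>m. 1 / real m / 4) \<longlonglongrightarrow> 0"
    by (intro tendsto_divide_zero lim_1_over_n)
  then have "(\<lambda>m. 1 - 1 / real m / 4) \<longlonglongrightarrow> 1 - 0"
    by (intro tendsto_diff tendsto_const)
  then show "(\<lambda>m. 1 - 1 / (4 * real m)) \<longlonglongrightarrow> 1"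
    by (simp add: mult.commute)
  show "\<forall>\<^sub>F m in sequentially. 1 - 1 / (4 * real m) < 1"
    using eventually_gt_at_top[of 0] by eventually_elim simp
qed

lemma I_int_exp_gap_series_at_sample_ge:
  fixes c :: "nat \<Rightarrow> real"
  assumes "summable c" "\<And>k. 0 \<le> c k" "inj n" "1 \<le> n j"
  shows "pi * (c j * n j)\<^sup>2 \<le> I_int (\<lambda>z. exp (gap_series c n z)) (1 - 1 / (4 * real (n j)))"
proof -
  define r where "r = 1 - 1 / (4 * real (n j))"
  have r: "0 \<le> r" "r < 1"
    using assms(4) by (auto simp: r_def field_simps)
  have "1 + real (n j) * (- 1 / (4 * real (n j))) \<le> (1 + (- 1 / (4 * real (n j)))) ^ n j"
    by (rule Bernoulli_inequality) (use assms(4) in \<open>simp add: field_simps\<close>)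
  then have "3/4 \<le> r ^ n j"
    using assms(4) by (simp add: r_def)
  then have "(3/4)\<^sup>2 \<le> (r ^ n j)\<^sup>2"
    by (rule power_mono) simp
  have "pi * (c j * n j)\<^sup>2 \<le> 9/8 * (pi * (c j * n j)\<^sup>2)"
    by simp
  also have "\<dots> = 2 * pi * (c j * n j)\<^sup>2 * (3/4)\<^sup>2"
    by (simp add: field_simps)
  also have "\<dots> \<le> 2 * pi * (c j * n j)\<^sup>2 * (r ^ n j)\<^sup>2"
    by (intro mult_left_mono \<open>(3/4)\<^sup>2 \<le> (r ^ n j)\<^sup>2\<close>) simp
  also have "\<dots> = 2 * pi * (c j * n j * r ^ n j)\<^sup>2"
    by (simp add: power_mult_distrib)
  also have "\<dots> \<le> I_int (\<lambda>z. exp (gap_series c n z)) r"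
    by (rule I_int_exp_gap_series_ge[OF assms(1-3) r])
  finally show ?thesis
    by (simp add: r_def)
qed

lemma I_int_exp_gap_series_at_sample_div_ge:
  fixes c :: "nat \<Rightarrow> real"
  assumes "summable c" "\<And>k. 0 \<le> c k" "inj n" "1 \<le> n j"
    and "0 < y" "y \<le> (c j)\<^sup>2 / (16 * (real j + 1)) * (4 * real (n j))\<^sup>2"
  shows "real j \<le> I_int (\<lambda>z. exp (gap_series c n z)) (1 - 1 / (4 * real (n j))) / y"
proof -
  have "real j + 1 \<noteq> 0"
    using of_nat_0_le_iff[of j] by linarith
  have "pi * (real j + 1) * y \<le> pi * (real j + 1) * ((c j)\<^sup>2 / (16 * (real j + 1)) * (4 * real (n j))\<^sup>2)"
    by (rule mult_left_mono[OF assms(6)]) simp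
  also have "\<dots> = pi * (c j * n j)\<^sup>2"
    using \<open>real j + 1 \<noteq> 0\<close> by (simp add: field_simps power2_eq_square)
  also have "\<dots> \<le> I_int (\<lambda>z. exp (gap_series c n z)) (1 - 1 / (4 * real (n j)))"
    by (rule I_int_exp_gap_series_at_sample_ge[OF assms(1-4)])
  finally have bound: "pi * (real j + 1) \<le> I_int (\<lambda>z. exp (gap_series c n z)) (1 - 1 / (4 * real (n j))) / y"
    by (simp only: pos_le_divide_eq[OF assms(5)])
  have "real j \<le> 3 * (real j + 1)"
    by simp
  also have "\<dots> \<le> pi * (real j + 1)"
    using pi_gt3 by (intro mult_right_mono) auto
  also note bound
  finally show ?thesis .
qed

lemma exists_strict_mono_forall_eventually:
  fixes P :: "nat \<Rightarrow> nat \<Rightarrow> bool"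
  assumes "\<And>k. eventually (P k) sequentially"
  shows "\<exists>n. strict_mono n \<and> (\<forall>k. P k (n k))"
proof -
  have step: "\<exists>y. P (Suc k) y \<and> x < y" for k x
  proof -
    obtain N where "\<forall>m\<ge>N. P (Suc k) m"
      using assms[of "Suc k"] by (auto simp: eventually_sequentially)
    then show ?thesis
      by (intro exI[of _ "max N (Suc x)"]) auto
  qed
  have "\<exists>x. P 0 x"
    using assms[of 0] by (auto simp: eventually_sequentially)
  then obtain n where "\<forall>k. P k (n k) \<and> n k < n (Suc k)"
    using dependent_nat_choice[of P "\<lambda>_ x y. x < y"] step by blast
  then show ?thesis
    by (auto intro: strict_monoI_Suc)
qed

lemma exists_strict_mono_smallo_at_one_minus_quarter_inverse:
  fixes \<Phi> :: "real \<Rightarrow> real" and \<epsilon> :: "nat \<Rightarrow> real"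
  assumes "\<Phi> \<in> o[at_left 1](\<lambda>r. 1 / (1 - r)\<^sup>2)" "\<And>k. 0 < \<epsilon> k"
  shows "\<exists>n. strict_mono n \<and>
           (\<forall>k. 1 \<le> n k \<and> \<Phi> (1 - 1 / (4 * real (n k))) \<le> \<epsilon> k * (4 * real (n k))\<^sup>2)"
proof (rule exists_strict_mono_forall_eventually
    [where P = "\<lambda>k m. 1 \<le> m \<and> \<Phi> (1 - 1 / (4 * real m)) \<le> \<epsilon> k * (4 * real m)\<^sup>2"])
  fix k
  have "eventually (\<lambda>m::nat. norm (\<Phi> (1 - 1 / (4 * real m)))
          \<le> \<epsilon> k * norm (1 / (1 - (1 - 1 / (4 * real m)))\<^sup>2)) sequentially"
    using landau_o.smallD[OF assms] filterlim_one_minus_quarter_inverse_at_left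
    by (rule eventually_compose_filterlim)
  with eventually_ge_at_top[of 1]
  show "eventually (\<lambda>m. 1 \<le> m \<and> \<Phi> (1 - 1 / (4 * real m)) \<le> \<epsilon> k * (4 * real m)\<^sup>2) sequentially"
  proof eventually_elim
    case (elim m)
    then show ?case
      by (simp add: power2_eq_square field_simps)
  qed
qed

lemma Limsup_eq_infinity_along_sequence:
  fixes f :: "'a \<Rightarrow> real" and s :: "nat \<Rightarrow> 'a"
  assumes "filterlim s F sequentially" "filterlim (\<lambda>j. f (s j)) at_top sequentially"
  shows "Limsup F (\<lambda>x. ereal (f x)) = \<infinity>"
proof -
  have "\<infinity> = limsup (\<lambda>j. ereal (f (s j)))"
    using assms(2) by (intro lim_imp_Limsup[symmetric]) (simp_all add: tendsto_PInfty_eq_at_top)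
  also have "\<dots> \<le> Limsup (filtermap s sequentially) (\<lambda>x. ereal (f x))"
    by (rule Limsup_filtermap_ge)
  also have "\<dots> \<le> Limsup F (\<lambda>x. ereal (f x))"
    using assms(1) unfolding filterlim_def Limsup_def
    by (intro INF_superset_mono) (auto simp: le_filter_def)
  finally show ?thesis
    by (simp add: top_unique[unfolded top_ereal_def])
qed

theorem theorem1p3:
  fixes \<Phi> :: "real \<Rightarrow> real"
  assumes pos: "\<And>r. 0 < r \<Longrightarrow> r < 1 \<Longrightarrow> \<Phi> r > 0"
    and small: "\<Phi> \<in> o[at_left 1](\<lambda>r. 1 / (1 - r)\<^sup>2)"
  shows "\<exists>p\<in>carath_class.
           Limsup (at_left 1) (\<lambda>r. ereal (I_int p r / \<Phi> r)) = \<infinity>"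
proof -
  define c :: "nat \<Rightarrow> real" where "c k = (1/2) ^ Suc k" for k
  define \<rho> :: "nat \<Rightarrow> real" where "\<rho> m = 1 - 1 / (4 * real m)" for m
  have "c sums 1"
    unfolding c_def by (rule power_half_series)
  then have c: "summable c" "suminf c = 1" "\<And>k. 0 \<le> c k"
    by (simp_all add: sums_iff c_def)
  have "0 < (c k)\<^sup>2 / (16 * (real k + 1))" for k
    by (simp add: c_def)
  from exists_strict_mono_smallo_at_one_minus_quarter_inverse
         [where \<epsilon> = "\<lambda>k. (c k)\<^sup>2 / (16 * (real k + 1))", OF small this]
  obtain n where n: "strict_mono n" "\<And>k. 1 \<le> n k"
    "\<And>k. \<Phi> (\<rho> (n k)) \<le> (c k)\<^sup>2 / (16 * (real k + 1)) * (4 * real (n k))\<^sup>2"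
    unfolding \<rho>_def by blast
  define p where "p = (\<lambda>z. exp (gap_series c n z))"
  have p_class: "p \<in> carath_class"
    unfolding p_def using c pi_gt3 by (intro exp_gap_series_in_carath_class) simp_all
  have ratio: "real k \<le> I_int p (\<rho> (n k)) / \<Phi> (\<rho> (n k))" for k
  proof -
    have "0 < \<Phi> (\<rho> (n k))"
      using n(2)[of k] by (intro pos) (auto simp: \<rho>_def field_simps)
    then show ?thesis
      unfolding p_def \<rho>_def
      by (rule I_int_exp_gap_series_at_sample_div_ge[OF c(1,3) strict_mono_imp_inj_on[OF n(1)] n(2) _
            n(3)[unfolded \<rho>_def]])
  qed
  have ratio_lim: "filterlim (\<lambda>k. I_int p (\<rho> (n k)) / \<Phi> (\<rho> (n k))) at_top sequentially"
    by (rule filterlim_at_top_mono[OF filterlim_real_sequentially always_eventually])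
       (use ratio in blast)
  have sample_lim: "filterlim (\<lambda>k. \<rho> (n k)) (at_left 1) sequentially"
    unfolding \<rho>_def
    by (rule filterlim_compose[OF filterlim_one_minus_quarter_inverse_at_left filterlim_subseq[OF n(1)]])
  show ?thesis
    using Limsup_eq_infinity_along_sequence[where f="\<lambda>r. I_int p r / \<Phi> r", OF sample_lim ratio_lim] p_class
    by blast
qed

end
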